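(* Let $\mathcal G$ be the DAG with vertices $A,B,C$ and edges $A\to B$, $A\to C$ only, and let $a,a'$ be distinct values of $A$. Then the distributions $p(\{B,C\}((aB),(a'C)))$, $p(\{B,C\}((aB)))$ and $p(\{B,C\}((aC)))$ are not identifiable from $p(A,B,C)$ under the single world model (SWM) for $\mathcal G$.
   Context: A causal structure for $\mathcal G$ consists of random variables $A$, $B(a)$, $C(a)$ for all $a$ in the state space of $A$, with a joint distribution; the observed variables are $A$, $B=B(A)$, $C=C(A)$. The SWM (FFRCISTG model) of $\mathcal G$ is the set of causal structures in which, for every value $a$, the variables $A$, $B(a)$, $C(a)$ are mutually independent. A counterfactual distribution is identifiable from $p(A,B,C)$ under the model if any two causal structures in the model inducing the same $p(A,B,C)$ induce the same value of it. Edge intervention responses: $\{B,C\}((aB),(a'C))$ denotes the pair $(B(a),C(a'))$ (edge $A\to B$ set to $a$, edge $A\to C$ set to $a'$); $\{B,C\}((aB))$ denotes $(B(a),C(A))=(B(a),C)$; $\{B,C\}((aC))$ denotes $(B,C(a))$. *)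

theory Defs
  imports "HOL-Probability.Probability_Mass_Function"
begin

text \<open>A causal structure for the DAG A -> B, A -> C: a joint distribution of the
  random variables A, B(x), C(x) (for all values x of A).\<close>

type_synonym ('a, 'b, 'c) causal_structure = "('a \<times> ('a \<Rightarrow> 'b) \<times> ('a \<Rightarrow> 'c)) pmf"

definition SWM :: "('a, 'b, 'c) causal_structure \<Rightarrow> bool" where
  "SWM P \<longleftrightarrow>
     (\<forall>x u v w.
        pmf (map_pmf (\<lambda>(s, f, g). (s, f x, g x)) P) (u, v, w) =
          pmf (map_pmf (\<lambda>(s, f, g). s) P) u *
          pmf (map_pmf (\<lambda>(s, f, g). f x) P) v *
          pmf (map_pmf (\<lambda>(s, f, g). g x) P) w)"

definition observed :: "('a, 'b, 'c) causal_structure \<Rightarrow> ('a \<times> 'b \<times> 'c) pmf" where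
  "observed P = map_pmf (\<lambda>(s, f, g). (s, f s, g s)) P"

definition identifiable_SWM :: "(('a, 'b, 'c) causal_structure \<Rightarrow> 'd) \<Rightarrow> bool" where
  "identifiable_SWM \<tau> \<longleftrightarrow>
     (\<forall>P Q. SWM P \<and> SWM Q \<and> observed P = observed Q \<longrightarrow> \<tau> P = \<tau> Q)"

definition BC_aB_a'C :: "'a \<Rightarrow> 'a \<Rightarrow> ('a, 'b, 'c) causal_structure \<Rightarrow> ('b \<times> 'c) pmf" where
  "BC_aB_a'C x x' P = map_pmf (\<lambda>(s, f, g). (f x, g x')) P"

definition BC_aB :: "'a \<Rightarrow> ('a, 'b, 'c) causal_structure \<Rightarrow> ('b \<times> 'c) pmf" where
  "BC_aB x P = map_pmf (\<lambda>(s, f, g). (f x, g s)) P"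

definition BC_aC :: "'a \<Rightarrow> ('a, 'b, 'c) causal_structure \<Rightarrow> ('b \<times> 'c) pmf" where
  "BC_aC x P = map_pmf (\<lambda>(s, f, g). (f s, g x)) P"

end

theory Submission
  imports Defs
begin

text \<open>Take A to be constant and let a fair coin drive the potential outcomes: B(x) is
  a function of the coin only at one treatment value, C(x) only at another, so at every x one
  of B(x), C(x) is constant and the single-world independences hold trivially.  Coupling C to
  the coin or to its negation changes the joint law of the two responses, whereas the observed
  law only ever sees one coin-driven response at a time and the coin is symmetric.\<close>

lemma SWM_constant_treatment:
  fixes X :: "'u pmf"
  assumes "\<And>x. (\<exists>v. \<forall>u. F u x = v) \<or> (\<exists>w. \<forall>u. G u x = w)"
  shows "SWM (map_pmf (\<lambda>u. (s, F u, G u)) X)"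
  unfolding SWM_def
proof (intro allI)
  fix x t v w
  from assms[of x] show
   "pmf (map_pmf (\<lambda>(s, f, g). (s, f x, g x)) (map_pmf (\<lambda>u. (s, F u, G u)) X)) (t, v, w) =
      pmf (map_pmf (\<lambda>(s, f, g). s) (map_pmf (\<lambda>u. (s, F u, G u)) X)) t *
      pmf (map_pmf (\<lambda>(s, f, g). f x) (map_pmf (\<lambda>u. (s, F u, G u)) X)) v *
      pmf (map_pmf (\<lambda>(s, f, g). g x) (map_pmf (\<lambda>u. (s, F u, G u)) X)) w"
  proof
    assume "\<exists>v. \<forall>u. F u x = v"
    then obtain v' where "\<And>u. F u x = v'" by blast
    then show ?thesis
      by (cases "s = t \<and> v' = v")
         (auto simp: pmf.map_comp o_def pmf_map vimage_def measure_pmf_single)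
  next
    assume "\<exists>w. \<forall>u. G u x = w"
    then obtain w' where "\<And>u. G u x = w'" by blast
    then show ?thesis
      by (cases "s = t \<and> w' = w")
         (auto simp: pmf.map_comp o_def pmf_map vimage_def measure_pmf_single)
  qed
qed

definition fair_coin :: "bool pmf" where
  "fair_coin = pmf_of_set UNIV"

lemma map_pmf_Not_fair_coin: "map_pmf Not fair_coin = fair_coin"
  unfolding fair_coin_def
  by (rule map_pmf_of_set_bij_betw) (auto simp: bij_betw_def inj_on_def image_iff)

lemma set_pmf_fair_coin [simp]: "set_pmf fair_coin = UNIV"
  by (simp add: fair_coin_def)

definition flip_at :: "'a \<Rightarrow> 'v \<Rightarrow> 'v \<Rightarrow> bool \<Rightarrow> 'a \<Rightarrow> 'v" where
  "flip_at x v0 v1 u y = (if y = x \<and> u then v1 else v0)"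

definition coin_structure ::
    "'a \<Rightarrow> (bool \<Rightarrow> 'a \<Rightarrow> 'b) \<Rightarrow> (bool \<Rightarrow> 'a \<Rightarrow> 'c) \<Rightarrow> ('a, 'b, 'c) causal_structure" where
  "coin_structure s F G = map_pmf (\<lambda>u. (s, F u, G u)) fair_coin"

lemma SWM_coin_structure_flip_at:
  assumes "xb \<noteq> xc"
  shows "SWM (coin_structure s (flip_at xb b0 b1) (\<lambda>u. flip_at xc c0 c1 (h u)))"
  unfolding coin_structure_def
  by (rule SWM_constant_treatment) (use assms in \<open>auto simp: flip_at_def\<close>)

lemma observed_coin_structure_flip_at_Not:
  assumes "xb \<noteq> xc"
  shows "observed (coin_structure s (flip_at xb b0 b1) (\<lambda>u. flip_at xc c0 c1 (\<not> u))) =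
         observed (coin_structure s (flip_at xb b0 b1) (flip_at xc c0 c1))"
proof (cases "s = xc")
  case True
  with assms have "observed (coin_structure s (flip_at xb b0 b1) (\<lambda>u. flip_at xc c0 c1 (\<not> u))) =
      map_pmf (\<lambda>u. (s, b0, flip_at xc c0 c1 u s)) (map_pmf Not fair_coin)"
    by (simp add: observed_def coin_structure_def pmf.map_comp o_def flip_at_def)
  also have "\<dots> = observed (coin_structure s (flip_at xb b0 b1) (flip_at xc c0 c1))"
    using True assms
    by (simp add: map_pmf_Not_fair_coin observed_def coin_structure_def pmf.map_comp o_def flip_at_def)
  finally show ?thesis .
next
  case False
  then show ?thesis
    by (simp add: observed_def coin_structure_def pmf.map_comp o_def flip_at_def)
qed

lemma response_pair_coin_structure_flip_at_Not:
  assumes "b0 \<noteq> b1" "c0 \<noteq> c1"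
  shows "map_pmf (\<lambda>(s, f, g). (f xb, g xc))
           (coin_structure s (flip_at xb b0 b1) (\<lambda>u. flip_at xc c0 c1 (\<not> u))) \<noteq>
         map_pmf (\<lambda>(s, f, g). (f xb, g xc))
           (coin_structure s (flip_at xb b0 b1) (flip_at xc c0 c1))"
proof -
  have "(b1, c1) \<in> set_pmf (map_pmf (\<lambda>(s, f, g). (f xb, g xc))
           (coin_structure s (flip_at xb b0 b1) (flip_at xc c0 c1)))"
    by (auto simp: coin_structure_def pmf.map_comp o_def flip_at_def image_iff)
  moreover have "(b1, c1) \<notin> set_pmf (map_pmf (\<lambda>(s, f, g). (f xb, g xc))
           (coin_structure s (flip_at xb b0 b1) (\<lambda>u. flip_at xc c0 c1 (\<not> u))))"
    using assms by (auto simp: coin_structure_def pmf.map_comp o_def flip_at_def split: if_splits)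
  ultimately show ?thesis by metis
qed

lemma not_identifiable_SWM_response_pair:
  fixes \<tau> :: "('a, 'b, 'c) causal_structure \<Rightarrow> ('b \<times> 'c) pmf" and b0 b1 :: 'b and c0 c1 :: 'c
  assumes "xb \<noteq> xc" "b0 \<noteq> b1" "c0 \<noteq> c1"
    and "\<And>F G. \<tau> (coin_structure s F G) =
                 map_pmf (\<lambda>(s, f, g). (f xb, g xc)) (coin_structure s F G)"
  shows "\<not> identifiable_SWM \<tau>"
proof -
  define P where "P = coin_structure s (flip_at xb b0 b1) (flip_at xc c0 c1)"
  define Q where "Q = coin_structure s (flip_at xb b0 b1) (\<lambda>u. flip_at xc c0 c1 (\<not> u))"
  have "SWM P" "SWM Q"
    unfolding P_def Q_def
    using SWM_coin_structure_flip_at[OF assms(1), where h = id]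
      SWM_coin_structure_flip_at[OF assms(1), where h = Not] by simp_all
  moreover have "observed Q = observed P"
    unfolding P_def Q_def by (rule observed_coin_structure_flip_at_Not[OF assms(1)])
  moreover have "\<tau> Q \<noteq> \<tau> P"
    unfolding P_def Q_def assms(4) by (rule response_pair_coin_structure_flip_at_Not[OF assms(2,3)])
  ultimately show ?thesis
    unfolding identifiable_SWM_def by blast
qed

theorem lemma12:
  fixes a a' :: 'a and b0 b1 :: 'b and c0 c1 :: 'c
  assumes "a \<noteq> a'" and "b0 \<noteq> b1" and "c0 \<noteq> c1"
  shows "\<not> identifiable_SWM (BC_aB_a'C a a' :: ('a, 'b, 'c) causal_structure \<Rightarrow> _)
       \<and> \<not> identifiable_SWM (BC_aB a :: ('a, 'b, 'c) causal_structure \<Rightarrow> _)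
       \<and> \<not> identifiable_SWM (BC_aC a :: ('a, 'b, 'c) causal_structure \<Rightarrow> _)"
proof (intro conjI)
  \<comment> \<open>With A constantly a', the edge-intervened responses C(A) and B(A) are C(a') and B(a').\<close>
  show "\<not> identifiable_SWM (BC_aB_a'C a a' :: ('a, 'b, 'c) causal_structure \<Rightarrow> _)"
    using assms by (intro not_identifiable_SWM_response_pair[where s = a'])
      (simp_all add: BC_aB_a'C_def)
  show "\<not> identifiable_SWM (BC_aB a :: ('a, 'b, 'c) causal_structure \<Rightarrow> _)"
    using assms by (intro not_identifiable_SWM_response_pair[where s = a' and xc = a'])
      (simp_all add: BC_aB_def coin_structure_def pmf.map_comp o_def)
  show "\<not> identifiable_SWM (BC_aC a :: ('a, 'b, 'c) causal_structure \<Rightarrow> _)"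
    using assms by (intro not_identifiable_SWM_response_pair[where s = a' and xb = a'])
      (simp_all add: BC_aC_def coin_structure_def pmf.map_comp o_def)
qed

end
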